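(* Let $G\in\mathcal{G}$ and let $\ell_G$ be its Lévy-induced level function. Consider the following data structure, working in the random oracle model with a uniformly random hash function $H:[n]\to[0,1]$ (the values $H(v)$, $v\in[n]$, i.i.d. $\mathrm{Uniform}(0,1)$). Its only state is a pair $(v_*,h_* )\in([n]\cup\{\perp\})\times(\mathbb{R}_+\cup\{\infty\})$, initially $(\perp,\infty)$. A vector $\mathbf{x}\in\mathbb{R}_+^n$ is initially $0$ and undergoes a stream of updates $\textsf{Update}(v,\Delta)$ with $v\in[n]$, $\Delta>0$, meaning $\mathbf{x}(v)\gets\mathbf{x}(v)+\Delta$. On each update, the data structure draws a fresh $Y\sim\mathrm{Exp}(1)$ independent of everything else, computes $h=\ell_G(Y/\Delta,H(v))$, and if $h<h_*$ sets $(v_*,h_* )\gets(v,h)$. Then at all times, for every $v\in[n]$, \[ \mathbb{P}(v_*=v)=\frac{G(\mathbf{x}(v))}{G(\mathbf{x})},\qquad\text{where } G(\mathbf{x})=\sum_{u\in[n]}G(\mathbf{x}(u)), \] i.e., it is a truly perfect $G$-sampler with zero probability of failure, storing only the pair $(v_*,h_* )$.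
   Context: $\mathbb{R}_+$ is the set of non-negative reals; $\mathrm{Exp}(\lambda)$ is the exponential distribution with rate $\lambda$. The class $\mathcal{G}$ consists of all functions $G:\mathbb{R}_+\to\mathbb{R}_+$ of the form $G(z)=c\,\mathbf{1}[z>0]+\gamma_0 z+\int_{(0,\infty)}(1-e^{-rz})\,\nu(dr)$ with $c,\gamma_0\ge0$ and $\nu$ a non-negative measure on $(0,\infty)$ satisfying $\int_{(0,\infty)}\min\{r,1\}\nu(dr)<\infty$. By the Lévy–Khintchine representation, each $G\in\mathcal{G}$ corresponds to a non-negative (possibly killed, i.e. allowed to take the value $\infty$) Lévy process $(X_t)_{t\ge0}$ (stationary independent increments, $X_0=0$, stochastically continuous) with $\mathbb{E}e^{-zX_t}=e^{-tG(z)}$ for all $t,z\ge0$. The Lévy-induced level function $\ell_G:(0,\infty)\times(0,1)\to\mathbb{R}_+$ is $\ell_G(a,b)=\inf\{t\ge 0:\mathbb{P}(X_t\ge a)\ge b\}$. *)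

theory Defs
  imports "HOL-Probability.Probability"
begin

text \<open>The class of Laplace exponents G (Bernstein functions with killing term), given
  by the Levy-Khintchine form on the non-negative reals.\<close>
definition in_class_G :: "(real \<Rightarrow> real) \<Rightarrow> bool" where
  "in_class_G G \<longleftrightarrow>
     (\<exists>c \<gamma>0 (\<nu>::real measure).
        c \<ge> 0 \<and> \<gamma>0 \<ge> 0 \<and> sets \<nu> = sets borel \<and> emeasure \<nu> {..0} = 0 \<and>
        (\<integral>\<^sup>+ r. ennreal (min r 1) \<partial>\<nu>) < \<infinity> \<and>
        (\<forall>z\<ge>0. G z = c * (if z > 0 then 1 else 0) + \<gamma>0 * z
                       + (\<integral> r. (1 - exp (- (r * z))) \<partial>\<nu>)))"

text \<open>X is a (possibly killed, i.e. extended-valued) non-negative process on the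
  probability space M whose marginals have Laplace transform
  E exp(-z X_t) = exp(-t G(z)) (with exp(-z * infinity) = 0 for z > 0).\<close>
definition has_laplace_exponent ::
    "'w measure \<Rightarrow> (real \<Rightarrow> 'w \<Rightarrow> ennreal) \<Rightarrow> (real \<Rightarrow> real) \<Rightarrow> bool" where
  "has_laplace_exponent M X G \<longleftrightarrow>
     prob_space M \<and>
     (\<forall>t\<ge>0. X t \<in> borel_measurable M \<and>
        (\<forall>z>0. (\<integral>\<omega>. (if X t \<omega> = \<top> then 0 else exp (- (z * enn2real (X t \<omega>)))) \<partial>M)
               = exp (- (t * G z))))"

definition levy_level ::
    "'w measure \<Rightarrow> (real \<Rightarrow> 'w \<Rightarrow> ennreal) \<Rightarrow> real \<Rightarrow> real \<Rightarrow> ennreal" where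
  "levy_level M X a b =
     Inf (ennreal ` {t. 0 \<le> t \<and> measure M {\<omega> \<in> space M. ennreal a \<le> X t \<omega>} \<ge> b})"

text \<open>State of the sampler: (v_*, h_*) with v_* = None standing for bottom.\<close>
type_synonym ds_state = "nat option \<times> ennreal"

definition ds_init :: ds_state where
  "ds_init = (None, \<top>)"

definition ds_step ::
    "(real \<Rightarrow> real \<Rightarrow> ennreal) \<Rightarrow> (nat \<Rightarrow> real) \<Rightarrow> real \<Rightarrow> nat \<times> real \<Rightarrow> ds_state \<Rightarrow> ds_state" where
  "ds_step l H Y u s =
     (let h = l (Y / snd u) (H (fst u)) in if h < snd s then (Some (fst u), h) else s)"

text \<open>Running the stream of updates us; the i-th update (0-based) uses Y i.\<close>
definition ds_run ::
    "(real \<Rightarrow> real \<Rightarrow> ennreal) \<Rightarrow> (nat \<Rightarrow> real) \<Rightarrow> (nat \<Rightarrow> real) \<Rightarrow> (nat \<times> real) list \<Rightarrow> ds_state" where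
  "ds_run l H Y us = foldl (\<lambda>s (i, u). ds_step l H (Y i) u s) ds_init (List.enumerate 0 us)"

definition stream_vec :: "(nat \<times> real) list \<Rightarrow> nat \<Rightarrow> real" where
  "stream_vec us v = sum_list (map snd (filter (\<lambda>u. fst u = v) us))"

definition sampler_space :: "nat \<Rightarrow> nat \<Rightarrow> ((nat \<Rightarrow> real) \<times> (nat \<Rightarrow> real)) measure" where
  "sampler_space n m =
     (\<Pi>\<^sub>M v\<in>{..<n}. uniform_measure lborel {0..1}) \<Otimes>\<^sub>M
     (\<Pi>\<^sub>M i\<in>{..<m}. density lborel (exponential_density 1))"

end

theory Submission
  imports Defs
begin

text \<open>The level of an update \<open>i\<close> to coordinate \<open>v\<close> is \<open>l(Y\<^sub>i / \<Delta>\<^sub>i, H(v))\<close>. As \<open>l\<close> is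
  monotone in its first argument, the least level among the updates to \<open>v\<close>, the clock of \<open>v\<close>,
  is \<open>l(A\<^sub>v, H(v))\<close>, where \<open>A\<^sub>v = min\<^sub>i Y\<^sub>i / \<Delta>\<^sub>i\<close> is exponential with rate \<open>x(v)\<close> and
  independent of the uniform \<open>H(v)\<close>. By Fubini, \<open>P(l(A, U) \<le> t) = \<integral> P(X\<^sub>t \<ge> a) dExp(x)(a)
  = 1 - E exp(-x X\<^sub>t) = 1 - exp(-t G(x))\<close>, so the clocks are independent exponential clocks
  with rates \<open>G(x(v))\<close> (a clock of rate zero never rings). The sampler keeps the first update
  of least level, i.e. it outputs the coordinate whose clock rings first, which is \<open>v\<close> with
  probability \<open>G(x(v)) / \<Sum>\<^sub>u G(x(u))\<close>.\<close>

section \<open>Moments determine the law of a random variable in [0,1]\<close>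

lemma (in prob_space) integral_polynomial:
  fixes C :: "'a \<Rightarrow> real"
  assumes C: "C \<in> borel_measurable M" and C01: "\<And>x. x \<in> space M \<Longrightarrow> C x \<in> {0..1}"
  shows "(\<integral>x. (\<Sum>i\<le>N. c i * C x ^ i) \<partial>M) = (\<Sum>i\<le>N. c i * (\<integral>x. C x ^ i \<partial>M))"
proof -
  have "integrable M (\<lambda>x. C x ^ i)" for i
    using C C01 by (intro integrable_const_bound[where B=1]) (auto intro!: power_le_one)
  then show ?thesis by simp
qed

lemma (in prob_space) abs_integral_diff_le:
  fixes f g :: "real \<Rightarrow> real"
  assumes C: "C \<in> borel_measurable M" and CS: "\<And>x. x \<in> space M \<Longrightarrow> C x \<in> S"
    and "compact S" and f: "continuous_on UNIV f" and g: "continuous_on UNIV g"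
    and close: "\<And>y. y \<in> S \<Longrightarrow> \<bar>f y - g y\<bar> \<le> e"
  shows "\<bar>(\<integral>x. f (C x) \<partial>M) - (\<integral>x. g (C x) \<partial>M)\<bar> \<le> e"
proof -
  have integrable: "integrable M (\<lambda>x. h (C x))" if h: "continuous_on UNIV h" for h :: "real \<Rightarrow> real"
  proof -
    obtain K where K: "\<And>y. y \<in> S \<Longrightarrow> \<bar>h y\<bar> \<le> K"
      using compact_continuous_image[OF continuous_on_subset[OF h] \<open>compact S\<close>, THEN compact_imp_bounded]
      by (force simp: bounded_iff)
    have "h \<in> borel_measurable borel" using h by (rule borel_measurable_continuous_onI)
    then show ?thesis
      by (intro integrable_const_bound[where B=K]) (use C CS K in auto)
  qed
  have "\<bar>(\<integral>x. f (C x) \<partial>M) - (\<integral>x. g (C x) \<partial>M)\<bar> = \<bar>\<integral>x. f (C x) - g (C x) \<partial>M\<bar>"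
    using integrable[OF f] integrable[OF g] by simp
  also have "\<dots> \<le> (\<integral>x. \<bar>f (C x) - g (C x)\<bar> \<partial>M)"
    by (rule integral_abs_bound)
  also have "\<dots> \<le> (\<integral>x. e \<partial>M)"
    using integrable[OF f] integrable[OF g] close CS by (intro integral_mono) auto
  finally show ?thesis by (simp add: prob_space)
qed

lemma integral_continuous_eq_of_moments_eq:
  fixes A :: "'a \<Rightarrow> real" and B :: "'b \<Rightarrow> real" and f :: "real \<Rightarrow> real"
  assumes P: "prob_space P" and Q: "prob_space Q"
    and A: "A \<in> borel_measurable P" and B: "B \<in> borel_measurable Q"
    and A01: "\<And>x. x \<in> space P \<Longrightarrow> A x \<in> {0..1}"
    and B01: "\<And>x. x \<in> space Q \<Longrightarrow> B x \<in> {0..1}"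
    and moments: "\<And>k. (\<integral>x. A x ^ k \<partial>P) = (\<integral>x. B x ^ k \<partial>Q)"
    and f: "continuous_on UNIV f"
  shows "(\<integral>x. f (A x) \<partial>P) = (\<integral>x. f (B x) \<partial>Q)"
proof -
  interpret P: prob_space P by fact
  interpret Q: prob_space Q by fact
  have "\<bar>(\<integral>x. f (A x) \<partial>P) - (\<integral>x. f (B x) \<partial>Q)\<bar> \<le> e" if "0 < e" for e
  proof -
    obtain g where "real_polynomial_function g" and fg: "\<And>y. y \<in> {0..1} \<Longrightarrow> \<bar>f y - g y\<bar> < e / 2"
      using Stone_Weierstrass_real_polynomial_function[of "{0..1}" f "e / 2"]
        continuous_on_subset[OF f] \<open>0 < e\<close> by auto
    then obtain c N where c: "g = (\<lambda>x. \<Sum>i\<le>N. c i * x ^ i)"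
      using real_polynomial_function_iff_sum by blast
    have g: "continuous_on UNIV g" unfolding c by (intro continuous_intros)
    have fg': "\<And>y. y \<in> {0..1} \<Longrightarrow> \<bar>f y - g y\<bar> \<le> e / 2"
      using fg by (simp add: less_imp_le)
    have "\<bar>(\<integral>x. f (A x) \<partial>P) - (\<integral>x. g (A x) \<partial>P)\<bar> \<le> e / 2"
      by (rule P.abs_integral_diff_le[OF A A01 compact_Icc f g fg'])
    moreover have "\<bar>(\<integral>x. f (B x) \<partial>Q) - (\<integral>x. g (B x) \<partial>Q)\<bar> \<le> e / 2"
      by (rule Q.abs_integral_diff_le[OF B B01 compact_Icc f g fg'])
    moreover have "(\<integral>x. g (A x) \<partial>P) = (\<integral>x. g (B x) \<partial>Q)"
      by (simp add: c P.integral_polynomial[OF A A01] Q.integral_polynomial[OF B B01] moments)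
    ultimately show ?thesis by linarith
  qed
  then show ?thesis using dense_eq0_I[of "(\<integral>x. f (A x) \<partial>P) - (\<integral>x. f (B x) \<partial>Q)"] by simp
qed

definition cutoff :: "real \<Rightarrow> nat \<Rightarrow> real \<Rightarrow> real" where
  "cutoff c j y = max 0 (min 1 (1 - real (Suc j) * (y - c)))"

lemma continuous_on_cutoff: "continuous_on UNIV (cutoff c j)"
  unfolding cutoff_def by (intro continuous_intros)

lemma cutoff_tendsto_indicator: "(\<lambda>j. cutoff c j y) \<longlonglongrightarrow> indicator {..c} y"
proof (cases "y \<le> c")
  case True
  then have "cutoff c j y = 1" for j
    unfolding cutoff_def by (auto simp: mult_nonneg_nonpos max_def min_def)
  then show ?thesis using True by simp
next
  case False
  obtain N :: nat where N: "1 / (y - c) < real N" using reals_Archimedean2 by blast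
  have "cutoff c j y = 0" if "N \<le> j" for j
  proof -
    have "1 / (y - c) < real (Suc j)" using N that by linarith
    then show ?thesis using False by (simp add: cutoff_def field_simps)
  qed
  then have "(\<lambda>j. cutoff c j y) \<longlonglongrightarrow> 0"
    by (intro tendsto_eventually eventually_sequentiallyI)
  then show ?thesis using False by simp
qed

lemma (in prob_space) integral_cutoff_tendsto:
  assumes C: "C \<in> borel_measurable M"
  shows "(\<lambda>j. \<integral>x. cutoff c j (C x) \<partial>M) \<longlonglongrightarrow> prob {x \<in> space M. C x \<le> c}"
proof -
  have [measurable]: "cutoff c j \<in> borel_measurable borel" for j
    using continuous_on_cutoff by (rule borel_measurable_continuous_onI)
  have "(\<lambda>j. \<integral>x. cutoff c j (C x) \<partial>M) \<longlonglongrightarrow> (\<integral>x. indicator {..c} (C x) \<partial>M)"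
    by (rule integral_dominated_convergence[where w="\<lambda>_. 1"])
       (use C cutoff_tendsto_indicator in \<open>auto simp: cutoff_def\<close>)
  also have "(\<integral>x. indicator {..c} (C x) \<partial>M) = (\<integral>x. indicator {x \<in> space M. C x \<le> c} x \<partial>M)"
    by (intro Bochner_Integration.integral_cong) (auto simp: indicator_def)
  also have "\<dots> = prob {x \<in> space M. C x \<le> c}"
    using C by simp
  finally show ?thesis .
qed

lemma measure_le_eq_of_moments_eq:
  fixes A :: "'a \<Rightarrow> real" and B :: "'b \<Rightarrow> real"
  assumes P: "prob_space P" and Q: "prob_space Q"
    and A: "A \<in> borel_measurable P" and B: "B \<in> borel_measurable Q"
    and A01: "\<And>x. x \<in> space P \<Longrightarrow> A x \<in> {0..1}"
    and B01: "\<And>x. x \<in> space Q \<Longrightarrow> B x \<in> {0..1}"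
    and moments: "\<And>k. (\<integral>x. A x ^ k \<partial>P) = (\<integral>x. B x ^ k \<partial>Q)"
  shows "measure P {x \<in> space P. A x \<le> c} = measure Q {x \<in> space Q. B x \<le> c}"
proof -
  have "(\<integral>x. cutoff c j (A x) \<partial>P) = (\<integral>x. cutoff c j (B x) \<partial>Q)" for j
    by (rule integral_continuous_eq_of_moments_eq[OF assms continuous_on_cutoff])
  then show ?thesis
    using prob_space.integral_cutoff_tendsto[OF P A, of c] prob_space.integral_cutoff_tendsto[OF Q B, of c]
    by (simp add: LIMSEQ_unique)
qed

section \<open>Processes with a Laplace exponent\<close>

definition enn_exp_neg :: "ennreal \<Rightarrow> real" where
  "enn_exp_neg x = (if x = \<top> then 0 else exp (- enn2real x))"

lemma enn_exp_neg_nonneg [simp]: "0 \<le> enn_exp_neg x"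
  and enn_exp_neg_le_1 [simp]: "enn_exp_neg x \<le> 1"
  unfolding enn_exp_neg_def by (auto simp: enn2real_nonneg)

lemma borel_measurable_enn_exp_neg[measurable]: "enn_exp_neg \<in> borel_measurable borel"
  unfolding enn_exp_neg_def by measurable

lemma enn_exp_neg_power:
  "0 < k \<Longrightarrow> enn_exp_neg x ^ k = (if x = \<top> then 0 else exp (- (real k * enn2real x)))"
  unfolding enn_exp_neg_def by (simp add: exp_of_nat_mult[symmetric])

lemma enn_exp_neg_le_exp_iff:
  assumes "0 < a"
  shows "enn_exp_neg x \<le> exp (- a) \<longleftrightarrow> ennreal a \<le> x"
proof (cases "x = \<top>")
  case False
  then have "ennreal a \<le> x \<longleftrightarrow> a \<le> enn2real x"
    by (metis assms ennreal_enn2real_if ennreal_le_iff enn2real_nonneg less_imp_le)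
  then show ?thesis using False by (simp add: enn_exp_neg_def)
qed (simp add: enn_exp_neg_def)

lemma laplace_exponentD:
  assumes "has_laplace_exponent M X G" "0 \<le> t"
  shows "prob_space M" "X t \<in> borel_measurable M"
    and "\<And>z. 0 < z \<Longrightarrow>
      (\<integral>\<omega>. (if X t \<omega> = \<top> then 0 else exp (- (z * enn2real (X t \<omega>)))) \<partial>M) = exp (- (t * G z))"
  using assms unfolding has_laplace_exponent_def by auto

lemma integral_enn_exp_neg_power:
  assumes "has_laplace_exponent M X G" and "0 \<le> t"
  shows "(\<integral>\<omega>. enn_exp_neg (X t \<omega>) ^ k \<partial>M) = (if k = 0 then 1 else exp (- (t * G (real k))))"
proof (cases "k = 0")
  case True
  interpret prob_space M using laplace_exponentD[OF assms] by simp
  show ?thesis using True prob_space by simp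
next
  case False
  then show ?thesis
    using laplace_exponentD(3)[OF assms, of "real k"] by (simp add: enn_exp_neg_power)
qed

lemma laplace_exponent_nonneg:
  assumes L: "has_laplace_exponent M X G" and "0 < z"
  shows "0 \<le> G z"
proof -
  interpret prob_space M using laplace_exponentD[OF L, of 1] by simp
  have [measurable]: "X 1 \<in> borel_measurable M" using laplace_exponentD[OF L, of 1] by simp
  define f where "f \<omega> = (if X 1 \<omega> = \<top> then 0 else exp (- (z * enn2real (X 1 \<omega>))))" for \<omega>
  have [measurable]: "f \<in> borel_measurable M" unfolding f_def by measurable
  have f01: "0 \<le> f \<omega>" "f \<omega> \<le> 1" for \<omega>
    unfolding f_def using \<open>0 < z\<close> by (auto simp: enn2real_nonneg)
  have "exp (- G z) = (\<integral>\<omega>. f \<omega> \<partial>M)"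
    using laplace_exponentD(3)[OF L _ \<open>0 < z\<close>, of 1] by (simp add: f_def)
  also have "\<dots> \<le> (\<integral>\<omega>. 1 \<partial>M)"
    using f01 by (intro integral_mono integrable_const_bound[where B=1]) auto
  finally show ?thesis by (simp add: prob_space)
qed

definition tail_prob :: "'w measure \<Rightarrow> (real \<Rightarrow> 'w \<Rightarrow> ennreal) \<Rightarrow> real \<Rightarrow> real \<Rightarrow> real" where
  "tail_prob M X a t = measure M {\<omega> \<in> space M. ennreal a \<le> X t \<omega>}"

lemma integral_product_enn_exp_neg_power:
  assumes L: "has_laplace_exponent M X G" and "0 \<le> s" "s \<le> t"
  shows "(\<integral>p. (enn_exp_neg (X s (fst p)) * enn_exp_neg (X (t - s) (snd p))) ^ k \<partial>(M \<Otimes>\<^sub>M M))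
    = (\<integral>\<omega>. enn_exp_neg (X t \<omega>) ^ k \<partial>M)"
proof -
  have "0 \<le> t - s" using assms by auto
  interpret prob_space M using laplace_exponentD(1)[OF L \<open>0 \<le> s\<close>] .
  interpret MM: pair_prob_space M M ..
  have [measurable]: "X s \<in> borel_measurable M" "X (t - s) \<in> borel_measurable M"
    using laplace_exponentD(2)[OF L] assms \<open>0 \<le> t - s\<close> by auto
  let ?f = "\<lambda>(x, y). enn_exp_neg (X s x) ^ k * enn_exp_neg (X (t - s) y) ^ k"
  have "integrable (M \<Otimes>\<^sub>M M) ?f"
    by (intro MM.P.integrable_const_bound[where B=1])
       (auto split: prod.split simp: abs_mult intro!: mult_le_one power_le_one)
  have "(\<integral>p. (enn_exp_neg (X s (fst p)) * enn_exp_neg (X (t - s) (snd p))) ^ k \<partial>(M \<Otimes>\<^sub>M M))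
      = (\<integral>p. ?f p \<partial>(M \<Otimes>\<^sub>M M))"
    by (intro Bochner_Integration.integral_cong) (auto simp: power_mult_distrib)
  also have "\<dots> = (\<integral>x. (\<integral>y. ?f (x, y) \<partial>M) \<partial>M)"
    by (rule MM.integral_fst'[symmetric]) fact
  also have "\<dots> = (\<integral>x. enn_exp_neg (X s x) ^ k \<partial>M) * (\<integral>y. enn_exp_neg (X (t - s) y) ^ k \<partial>M)"
    by simp
  also have "\<dots> = (\<integral>\<omega>. enn_exp_neg (X t \<omega>) ^ k \<partial>M)"
    using assms by (simp add: integral_enn_exp_neg_power[OF L] exp_add[symmetric] algebra_simps)
  finally show ?thesis .
qed

text \<open>The definition of a Laplace exponent says nothing about increments, so monotonicity
  in time is obtained from moments: \<open>exp (- X t)\<close> has the moments of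
  \<open>exp (- X s) * exp (- X' (t - s))\<close> for an independent copy \<open>X'\<close>, and this
  product lies below \<open>exp (- X s)\<close>.\<close>
lemma tail_prob_mono:
  assumes L: "has_laplace_exponent M X G" and "0 \<le> s" "s \<le> t"
  shows "tail_prob M X a s \<le> tail_prob M X a t"
proof (cases "0 < a")
  case False
  then have "ennreal a = 0" by (simp add: ennreal_eq_0_iff)
  then show ?thesis
    using laplace_exponentD(1)[OF L \<open>0 \<le> s\<close>] by (simp add: tail_prob_def prob_space.prob_space)
next
  case True
  have "0 \<le> t" using assms by auto
  interpret prob_space M using laplace_exponentD(1)[OF L \<open>0 \<le> s\<close>] .
  interpret MM: pair_prob_space M M ..
  have [measurable]: "X s \<in> borel_measurable M" "X (t - s) \<in> borel_measurable M"
    using laplace_exponentD(2)[OF L] assms by auto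
  define B where "B p = enn_exp_neg (X s (fst p)) * enn_exp_neg (X (t - s) (snd p))" for p
  have S: "{\<omega> \<in> space M. ennreal a \<le> X s \<omega>} \<in> sets M" by measurable
  have "tail_prob M X a s = measure (M \<Otimes>\<^sub>M M) ({\<omega> \<in> space M. ennreal a \<le> X s \<omega>} \<times> space M)"
    using emeasure_pair_measure_Times[OF S sets.top]
    by (simp add: tail_prob_def measure_def emeasure_space_1)
  also have "\<dots> \<le> measure (M \<Otimes>\<^sub>M M) {p \<in> space (M \<Otimes>\<^sub>M M). B p \<le> exp (- a)}"
  proof (rule MM.P.finite_measure_mono)
    show "{\<omega> \<in> space M. ennreal a \<le> X s \<omega>} \<times> space M \<subseteq> {p \<in> space (M \<Otimes>\<^sub>M M). B p \<le> exp (- a)}"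
      using enn_exp_neg_le_exp_iff[OF True]
      by (fastforce simp: B_def space_pair_measure intro: order_trans[OF mult_left_le])
  qed (simp add: B_def)
  also have "\<dots> = measure M {\<omega> \<in> space M. enn_exp_neg (X t \<omega>) \<le> exp (- a)}"
    using laplace_exponentD(2)[OF L \<open>0 \<le> t\<close>] integral_product_enn_exp_neg_power[OF L assms(2,3)]
    by (intro measure_le_eq_of_moments_eq MM.P.prob_space_axioms prob_space_axioms)
       (auto simp: B_def intro: mult_le_one)
  also have "\<dots> = tail_prob M X a t"
    by (simp add: tail_prob_def enn_exp_neg_le_exp_iff[OF True])
  finally show ?thesis .
qed

lemma tail_prob_antimono:
  assumes L: "has_laplace_exponent M X G" and "0 \<le> t" "a \<le> a'"
  shows "tail_prob M X a' t \<le> tail_prob M X a t"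
proof -
  interpret prob_space M using laplace_exponentD(1)[OF L \<open>0 \<le> t\<close>] .
  have [measurable]: "X t \<in> borel_measurable M" using laplace_exponentD(2)[OF L \<open>0 \<le> t\<close>] .
  have "ennreal a \<le> ennreal a'" using \<open>a \<le> a'\<close> by (rule ennreal_leI)
  then show ?thesis
    unfolding tail_prob_def by (intro finite_measure_mono) (auto dest: order_trans)
qed

lemma tail_prob_nonneg: "0 \<le> tail_prob M X a t"
  by (simp add: tail_prob_def)

lemma tail_prob_le_1:
  "has_laplace_exponent M X G \<Longrightarrow> 0 \<le> t \<Longrightarrow> tail_prob M X a t \<le> 1"
  unfolding tail_prob_def using laplace_exponentD(1) prob_space.prob_le_1 by blast

lemma borel_measurable_tail_prob:
  assumes L: "has_laplace_exponent M X G" and "0 \<le> t"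
  shows "(\<lambda>a. tail_prob M X a t) \<in> borel_measurable borel"
proof -
  have "mono (\<lambda>a. - tail_prob M X a t)"
    using tail_prob_antimono[OF L \<open>0 \<le> t\<close>] by (intro monoI) simp
  then have "(\<lambda>a. - (- tail_prob M X a t)) \<in> borel_measurable borel"
    by (intro borel_measurable_uminus borel_measurable_mono)
  then show ?thesis by simp
qed

lemma emeasure_exponential_atMost_ennreal:
  assumes "0 < x"
  shows "emeasure (density lborel (exponential_density x)) {a. ennreal a \<le> y}
    = ennreal (1 - (if y = \<top> then 0 else exp (- (x * enn2real y))))"
proof (cases "y = \<top>")
  case True
  interpret prob_space "density lborel (exponential_density x)"
    using prob_space_exponential_density[OF assms] .
  show ?thesis using True emeasure_space_1 by simp
next
  case False
  then obtain r where r: "y = ennreal r" "0 \<le> r" by (cases y) auto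
  then have "{a. ennreal a \<le> y} = {..r}" by (auto simp: ennreal_le_iff)
  then show ?thesis
    using emeasure_erlang_density[OF assms, of 0 r] r by (simp add: erlang_CDF_0)
qed

lemma nn_integral_tail_prob_exponential:
  assumes L: "has_laplace_exponent M X G" and "0 < x" "0 \<le> t"
  shows "(\<integral>\<^sup>+a. tail_prob M X a t \<partial>density lborel (exponential_density x))
    = ennreal (1 - exp (- (t * G x)))"
proof -
  let ?D = "density lborel (exponential_density x)"
  define h where "h \<omega> = (if X t \<omega> = \<top> then 0 else exp (- (x * enn2real (X t \<omega>))))" for \<omega>
  interpret prob_space M using laplace_exponentD(1)[OF L \<open>0 \<le> t\<close>] .
  interpret D: prob_space ?D using prob_space_exponential_density[OF \<open>0 < x\<close>] .
  interpret pair_sigma_finite M ?D ..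
  have [measurable]: "X t \<in> borel_measurable M" using laplace_exponentD(2)[OF L \<open>0 \<le> t\<close>] .
  have [measurable]: "h \<in> borel_measurable M" unfolding h_def by measurable
  have h01: "0 \<le> h \<omega>" "h \<omega> \<le> 1" for \<omega>
    unfolding h_def using \<open>0 < x\<close> by auto
  have int_h: "integrable M h"
    using h01 by (intro integrable_const_bound[where B=1]) auto
  let ?E = "{p. ennreal (snd p) \<le> X t (fst p)}"
  have "(\<integral>\<^sup>+a. tail_prob M X a t \<partial>?D) = (\<integral>\<^sup>+a. (\<integral>\<^sup>+\<omega>. indicator ?E (\<omega>, a) \<partial>M) \<partial>?D)"
  proof (rule nn_integral_cong)
    fix a
    have "{\<omega> \<in> space M. ennreal a \<le> X t \<omega>} \<in> sets M" by measurable
    then show "ennreal (tail_prob M X a t) = (\<integral>\<^sup>+\<omega>. indicator ?E (\<omega>, a) \<partial>M)"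
      by (simp add: tail_prob_def emeasure_eq_measure[symmetric] nn_integral_indicator[symmetric]
          indicator_def cong: nn_integral_cong)
  qed
  also have "\<dots> = (\<integral>\<^sup>+\<omega>. (\<integral>\<^sup>+a. indicator ?E (\<omega>, a) \<partial>?D) \<partial>M)"
    by (rule Fubini') measurable
  also have "\<dots> = (\<integral>\<^sup>+\<omega>. ennreal (1 - h \<omega>) \<partial>M)"
  proof (rule nn_integral_cong)
    fix \<omega>
    have "(\<integral>\<^sup>+a. indicator ?E (\<omega>, a) \<partial>?D) = emeasure ?D {a. ennreal a \<le> X t \<omega>}"
      by (simp add: nn_integral_indicator[symmetric] indicator_def cong: nn_integral_cong)
    then show "(\<integral>\<^sup>+a. indicator ?E (\<omega>, a) \<partial>?D) = ennreal (1 - h \<omega>)"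
      by (simp add: emeasure_exponential_atMost_ennreal[OF \<open>0 < x\<close>] h_def)
  qed
  also have "\<dots> = ennreal (1 - (\<integral>\<omega>. h \<omega> \<partial>M))"
    using h01 int_h by (subst nn_integral_eq_integral) (auto simp: prob_space)
  also have "(\<integral>\<omega>. h \<omega> \<partial>M) = exp (- (t * G x))"
    unfolding h_def using laplace_exponentD(3)[OF L \<open>0 \<le> t\<close> \<open>0 < x\<close>] .
  finally show ?thesis .
qed

section \<open>The level function\<close>

lemma levy_level_eq_Inf_tail_prob:
  "levy_level M X a b = Inf (ennreal ` {t. 0 \<le> t \<and> b \<le> tail_prob M X a t})"
  unfolding levy_level_def tail_prob_def ..

lemma levy_level_le_iff:
  assumes L: "has_laplace_exponent M X G" and "0 \<le> t"
  shows "levy_level M X a b \<le> ennreal t \<longleftrightarrow> (\<forall>k::nat. b \<le> tail_prob M X a (t + 1 / Suc k))"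
proof
  assume le: "levy_level M X a b \<le> ennreal t"
  show "\<forall>k::nat. b \<le> tail_prob M X a (t + 1 / Suc k)"
  proof
    fix k :: nat
    have "levy_level M X a b < ennreal (t + 1 / Suc k)"
      using le by (rule le_less_trans) (use \<open>0 \<le> t\<close> in \<open>simp add: ennreal_lessI\<close>)
    then obtain s where s: "0 \<le> s" "b \<le> tail_prob M X a s" "ennreal s < ennreal (t + 1 / Suc k)"
      unfolding levy_level_eq_Inf_tail_prob Inf_less_iff by blast
    then have "s \<le> t + 1 / Suc k" by (simp add: ennreal_less_iff)
    with s show "b \<le> tail_prob M X a (t + 1 / Suc k)"
      using tail_prob_mono[OF L] by (meson order_trans)
  qed
next
  assume "\<forall>k::nat. b \<le> tail_prob M X a (t + 1 / Suc k)"
  then have "levy_level M X a b \<le> ennreal (t + 1 / Suc k)" for k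
    unfolding levy_level_eq_Inf_tail_prob using \<open>0 \<le> t\<close> by (intro Inf_lower imageI) simp
  moreover have "(\<lambda>k. ennreal (t + 1 / Suc k)) \<longlonglongrightarrow> ennreal (t + 0)"
    by (intro tendsto_ennrealI tendsto_add tendsto_const LIMSEQ_Suc[OF lim_inverse_n'])
  ultimately show "levy_level M X a b \<le> ennreal t"
    by (simp add: LIMSEQ_le_const)
qed

lemma borel_measurable_levy_level:
  assumes L: "has_laplace_exponent M X G"
    and [measurable]: "f \<in> borel_measurable N" "g \<in> borel_measurable N"
  shows "(\<lambda>x. levy_level M X (f x) (g x)) \<in> borel_measurable N"
proof (rule borel_measurableI_le)
  fix y :: ennreal
  show "{x \<in> space N. levy_level M X (f x) (g x) \<le> y} \<in> sets N"
  proof (cases y)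
    case (real t)
    have [measurable]: "(\<lambda>a. tail_prob M X a (t + 1 / Suc k)) \<in> borel_measurable borel" for k
      using real by (intro borel_measurable_tail_prob[OF L]) simp
    have "{x \<in> space N. levy_level M X (f x) (g x) \<le> y}
        = (\<Inter>k. {x \<in> space N. g x \<le> tail_prob M X (f x) (t + 1 / Suc k)})"
      using levy_level_le_iff[OF L] real by auto
    also have "\<dots> \<in> sets N" by measurable
    finally show ?thesis .
  qed simp
qed

lemma levy_level_mono:
  assumes L: "has_laplace_exponent M X G" and "a \<le> a'"
  shows "levy_level M X a b \<le> levy_level M X a' b"
  unfolding levy_level_eq_Inf_tail_prob
  using tail_prob_antimono[OF L _ \<open>a \<le> a'\<close>] by (intro Inf_superset_mono image_mono) (auto dest: order_trans)

lemma INF_levy_level: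
  assumes L: "has_laplace_exponent M X G" and "finite I" "I \<noteq> {}"
  shows "(INF i\<in>I. levy_level M X (a i) b) = levy_level M X (Min (a ` I)) b"
proof -
  have "mono (\<lambda>a. levy_level M X a b)"
    using levy_level_mono[OF L] by (intro monoI)
  then have "levy_level M X (Min (a ` I)) b = Min ((\<lambda>a. levy_level M X a b) ` a ` I)"
    using assms by (intro mono_Min_commute) auto
  also have "\<dots> = (INF i\<in>I. levy_level M X (a i) b)"
    using assms by (subst Min_Inf) (auto simp: image_image)
  finally show ?thesis ..
qed

lemma emeasure_uniform_01_atMost:
  assumes "0 \<le> c" "c \<le> 1"
  shows "emeasure (uniform_measure lborel {0..1}) {..c} = ennreal c"
proof -
  have "{0..1} \<inter> {..c} = {0..c}" using assms by auto
  then show ?thesis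
    using assms by (simp add: emeasure_uniform_measure divide_ennreal_def)
qed

lemma (in prob_space) emeasure_uniform_le_indep:
  fixes U A :: "'a \<Rightarrow> real"
  assumes U: "distr M borel U = uniform_measure lborel {0..1}"
    and indep: "indep_var borel U borel A"
    and [measurable]: "f \<in> borel_measurable borel" and f01: "\<And>a. f a \<in> {0..1}"
  shows "emeasure M {\<omega> \<in> space M. U \<omega> \<le> f (A \<omega>)} = (\<integral>\<^sup>+a. f a \<partial>distr M borel A)"
proof -
  have [measurable]: "U \<in> borel_measurable M" "A \<in> borel_measurable M"
    using indep by (auto dest: indep_var_rv1 indep_var_rv2)
  let ?D = "distr M borel A" and ?U = "uniform_measure lborel {0..1::real}"
  interpret U: prob_space ?U by (intro prob_space_uniform_measure) auto
  interpret D: prob_space ?D by (intro prob_space_distr) simp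
  interpret UD: pair_sigma_finite ?U ?D ..
  let ?E = "{p :: real \<times> real. fst p \<le> f (snd p)}"
  have "{p \<in> space (borel \<Otimes>\<^sub>M borel). fst p \<le> f (snd p)} \<in> sets (borel \<Otimes>\<^sub>M (borel :: real measure))"
    by measurable
  then have E: "?E \<in> sets (borel \<Otimes>\<^sub>M borel)" by (simp add: space_pair_measure)
  have "emeasure M {\<omega> \<in> space M. U \<omega> \<le> f (A \<omega>)}
      = emeasure (distr M (borel \<Otimes>\<^sub>M borel) (\<lambda>\<omega>. (U \<omega>, A \<omega>))) ?E"
    using E by (subst emeasure_distr) (auto intro!: arg_cong[where f="emeasure M"])
  also have "\<dots> = emeasure (?U \<Otimes>\<^sub>M ?D) ?E"
    using indep unfolding indep_var_distribution_eq U by simp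
  also have "\<dots> = (\<integral>\<^sup>+a. emeasure ?U ((\<lambda>u. (u, a)) -` ?E) \<partial>?D)"
  proof (rule UD.emeasure_pair_measure_alt2)
    have "sets (?U \<Otimes>\<^sub>M ?D) = sets (borel \<Otimes>\<^sub>M borel)"
      by (rule sets_pair_measure_cong) simp_all
    then show "?E \<in> sets (?U \<Otimes>\<^sub>M ?D)" using E by simp
  qed
  also have "\<dots> = (\<integral>\<^sup>+a. emeasure ?U {..f a} \<partial>?D)"
    by (simp add: vimage_def atMost_def)
  also have "\<dots> = (\<integral>\<^sup>+a. f a \<partial>?D)"
    using f01 by (intro nn_integral_cong) (simp add: emeasure_uniform_01_atMost del: emeasure_uniform_measure)
  finally show ?thesis .
qed

lemma (in prob_space) prob_uniform_le_tail_prob: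
  assumes L: "has_laplace_exponent N X G"
    and U: "distr M borel U = uniform_measure lborel {0..1}"
    and A: "distributed M lborel A (exponential_density x)" and "0 < x"
    and indep: "indep_var borel U borel A" and "0 \<le> s"
  shows "prob {\<omega> \<in> space M. U \<omega> \<le> tail_prob N X (A \<omega>) s} = 1 - exp (- (s * G x))"
proof -
  have "distr M borel A = distr M lborel A" by (rule distr_cong) auto
  then have D: "distr M borel A = density lborel (exponential_density x)"
    using distributed_distr_eq_density[OF A] by simp
  have "emeasure M {\<omega> \<in> space M. U \<omega> \<le> tail_prob N X (A \<omega>) s} = ennreal (1 - exp (- (s * G x)))"
    using tail_prob_nonneg tail_prob_le_1[OF L \<open>0 \<le> s\<close>]
    by (subst emeasure_uniform_le_indep[OF U indep borel_measurable_tail_prob[OF L \<open>0 \<le> s\<close>]])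
       (simp_all add: D nn_integral_tail_prob_exponential[OF L \<open>0 < x\<close> \<open>0 \<le> s\<close>])
  moreover have "0 \<le> 1 - exp (- (s * G x))"
    using laplace_exponent_nonneg[OF L \<open>0 < x\<close>] \<open>0 \<le> s\<close> by simp
  ultimately show ?thesis by (simp add: emeasure_eq_measure)
qed

lemma (in prob_space) prob_levy_level_le:
  assumes L: "has_laplace_exponent N X G"
    and U: "distr M borel U = uniform_measure lborel {0..1}"
    and A: "distributed M lborel A (exponential_density x)" and "0 < x"
    and indep: "indep_var borel U borel A" and "0 \<le> t"
  shows "prob {\<omega> \<in> space M. levy_level N X (A \<omega>) (U \<omega>) \<le> ennreal t} = 1 - exp (- (t * G x))"
proof -
  have [measurable]: "U \<in> borel_measurable M" "A \<in> borel_measurable M"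
    using indep by (auto dest: indep_var_rv1 indep_var_rv2)
  define B where "B k = {\<omega> \<in> space M. U \<omega> \<le> tail_prob N X (A \<omega>) (t + 1 / Suc k)}" for k :: nat
  have "range B \<subseteq> events"
  proof safe
    fix k
    have [measurable]: "(\<lambda>a. tail_prob N X a (t + 1 / Suc k)) \<in> borel_measurable borel"
      using \<open>0 \<le> t\<close> by (intro borel_measurable_tail_prob[OF L]) simp
    show "B k \<in> events" unfolding B_def by measurable
  qed
  moreover have "decseq B"
    unfolding decseq_Suc_iff B_def
    using \<open>0 \<le> t\<close> tail_prob_mono[OF L, of "t + 1 / Suc (Suc _)" "t + 1 / Suc _"]
    by (auto intro: order_trans simp: frac_le)
  ultimately have "(\<lambda>k. prob (B k)) \<longlonglongrightarrow> prob (\<Inter>k. B k)"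
    by (rule finite_Lim_measure_decseq)
  moreover have "prob (B k) = 1 - exp (- ((t + 1 / Suc k) * G x))" for k
    unfolding B_def using \<open>0 \<le> t\<close> by (intro prob_uniform_le_tail_prob[OF L U A \<open>0 < x\<close> indep]) simp
  then have "(\<lambda>k. prob (B k)) \<longlonglongrightarrow> 1 - exp (- ((t + 0) * G x))"
    by (simp only:) (intro tendsto_intros LIMSEQ_Suc[OF lim_inverse_n'])
  moreover have "{\<omega> \<in> space M. levy_level N X (A \<omega>) (U \<omega>) \<le> ennreal t} = (\<Inter>k. B k)"
    unfolding B_def levy_level_le_iff[OF L \<open>0 \<le> t\<close>] by auto
  ultimately show ?thesis
    using LIMSEQ_unique by fastforce
qed

section \<open>Races of exponential clocks\<close>

lemma (in prob_space) prob_exponential_less: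
  assumes "0 < a" "0 < b"
    and X: "distributed M lborel X (exponential_density a)"
    and Y: "distributed M lborel Y (exponential_density b)"
    and indep: "indep_var borel X borel Y"
  shows "prob {\<omega> \<in> space M. X \<omega> < Y \<omega>} = a / (a + b)"
proof -
  have [measurable]: "X \<in> borel_measurable M" "Y \<in> borel_measurable M"
    using indep by (auto dest: indep_var_rv1 indep_var_rv2)
  let ?DX = "distr M borel X" and ?DY = "distr M borel Y"
  have DX: "?DX = density lborel (exponential_density a)"
    using distributed_distr_eq_density[OF X] by (simp cong: distr_cong)
  interpret DX: prob_space ?DX by (intro prob_space_distr) simp
  interpret DY: prob_space ?DY by (intro prob_space_distr) simp
  let ?E = "{p :: real \<times> real. fst p < snd p}"
  have "{p \<in> space (borel \<Otimes>\<^sub>M borel). fst p < snd p} \<in> sets (borel \<Otimes>\<^sub>M (borel :: real measure))"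
    by measurable
  then have E: "?E \<in> sets (borel \<Otimes>\<^sub>M borel)" by (simp add: space_pair_measure)
  have tail: "emeasure ?DY {y. x < y} = ennreal (exp (- (x * b)))" if "0 \<le> x" for x
  proof -
    have "emeasure ?DY {y. x < y} = prob {\<omega> \<in> space M. x < Y \<omega>}"
      by (subst emeasure_distr) (auto simp: emeasure_eq_measure intro!: arg_cong[where f=prob])
    then show ?thesis
      using exponential_distributedD_gt[OF Y that \<open>0 < b\<close>] by simp
  qed
  have "emeasure M {\<omega> \<in> space M. X \<omega> < Y \<omega>} = emeasure (distr M (borel \<Otimes>\<^sub>M borel) (\<lambda>\<omega>. (X \<omega>, Y \<omega>))) ?E"
    using E by (subst emeasure_distr) (auto intro!: arg_cong[where f="emeasure M"])
  also have "\<dots> = emeasure (?DX \<Otimes>\<^sub>M ?DY) ?E"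
    using indep unfolding indep_var_distribution_eq by simp
  also have "\<dots> = (\<integral>\<^sup>+x. emeasure ?DY (Pair x -` ?E) \<partial>?DX)"
  proof (rule DY.emeasure_pair_measure_alt)
    have "sets (?DX \<Otimes>\<^sub>M ?DY) = sets (borel \<Otimes>\<^sub>M borel)"
      by (rule sets_pair_measure_cong) simp_all
    then show "?E \<in> sets (?DX \<Otimes>\<^sub>M ?DY)" using E by simp
  qed
  also have "\<dots> = (\<integral>\<^sup>+x. emeasure ?DY {y. x < y} \<partial>?DX)"
    by (simp add: vimage_def)
  also have "\<dots> = (\<integral>\<^sup>+x. ennreal (exponential_density a x) * emeasure ?DY {y. x < y} \<partial>lborel)"
    unfolding DX by (subst nn_integral_density) (auto simp: exponential_density_def)
  also have "\<dots> = (\<integral>\<^sup>+x. ennreal (a / (a + b)) * ennreal (exponential_density (a + b) x) \<partial>lborel)"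
  proof (rule nn_integral_cong)
    fix x :: real
    have "a * exp (- x * a) * exp (- (x * b)) = a / (a + b) * ((a + b) * exp (- x * (a + b)))"
      using assms by (simp add: field_simps exp_add[symmetric])
    then show "ennreal (exponential_density a x) * emeasure ?DY {y. x < y}
        = ennreal (a / (a + b)) * ennreal (exponential_density (a + b) x)"
      using assms by (cases "x < 0") (simp_all add: exponential_density_def tail ennreal_mult[symmetric])
  qed
  also have "\<dots> = ennreal (a / (a + b)) * emeasure (density lborel (exponential_density (a + b))) UNIV"
    by (subst nn_integral_cmult) (auto simp: emeasure_density exponential_density_def)
  also have "\<dots> = ennreal (a / (a + b))"
    using prob_space.emeasure_space_1[OF prob_space_exponential_density, of "a + b"] assms by simp
  finally show ?thesis
    using assms by (simp add: emeasure_eq_measure)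
qed

lemma (in prob_space) prob_exponential_first:
  assumes "finite S" "v \<notin> S"
    and indep: "indep_vars (\<lambda>_. borel) R (insert v S)"
    and rates: "\<And>u. u \<in> insert v S \<Longrightarrow> 0 < r u"
    and exp: "\<And>u. u \<in> insert v S \<Longrightarrow> distributed M lborel (R u) (exponential_density (r u))"
  shows "prob {\<omega> \<in> space M. \<forall>w \<in> S. R v \<omega> < R w \<omega>} = r v / (\<Sum>u \<in> insert v S. r u)"
proof (cases "S = {}")
  case True
  then show ?thesis using rates[of v] by (simp add: prob_space)
next
  case False
  let ?Min = "\<lambda>\<omega>. Min ((\<lambda>w. R w \<omega>) ` S)"
  have "indep_vars (\<lambda>_. borel) R S"
    using indep by (rule indep_vars_subset) auto
  then have "distributed M lborel ?Min (exponential_density (\<Sum>w \<in> S. r w))"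
    using \<open>finite S\<close> False rates exp by (intro exponential_distributed_Min) auto
  moreover have "indep_var borel (R v) borel ?Min"
    using \<open>finite S\<close> \<open>v \<notin> S\<close> indep by (rule indep_vars_Min)
  moreover have "0 < (\<Sum>w \<in> S. r w)"
    using \<open>finite S\<close> False rates by (intro sum_pos) auto
  ultimately have "prob {\<omega> \<in> space M. R v \<omega> < ?Min \<omega>} = r v / (r v + (\<Sum>w \<in> S. r w))"
    using rates exp by (intro prob_exponential_less) auto
  then show ?thesis
    using \<open>finite S\<close> \<open>v \<notin> S\<close> False by simp
qed

lemma (in prob_space) AE_clock_eq_top:
  assumes [measurable]: "T \<in> borel_measurable M"
    and never: "\<And>t. 0 \<le> t \<Longrightarrow> prob {\<omega> \<in> space M. T \<omega> \<le> ennreal t} = 0"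
  shows "AE \<omega> in M. T \<omega> = \<top>"
proof -
  have "AE \<omega> in M. \<not> T \<omega> \<le> ennreal (real k)" for k :: nat
    using never[of "real k"] by (subst prob_Collect_eq_0[symmetric]) auto
  then have "AE \<omega> in M. \<forall>k::nat. \<not> T \<omega> \<le> ennreal (real k)"
    by (simp add: AE_all_countable)
  then show ?thesis
  proof eventually_elim
    case (elim \<omega>)
    show ?case
    proof (rule ccontr)
      assume "T \<omega> \<noteq> \<top>"
      then obtain r where "T \<omega> = ennreal r" by (cases "T \<omega>") auto
      with elim real_arch_simple[of r] show False by (auto intro: ennreal_leI)
    qed
  qed
qed

lemma (in prob_space) AE_clock_finite:
  assumes [measurable]: "T \<in> borel_measurable M" and "0 < r"
    and clock: "\<And>t. 0 \<le> t \<Longrightarrow> prob {\<omega> \<in> space M. T \<omega> \<le> ennreal t} = 1 - exp (- (t * r))"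
  shows "AE \<omega> in M. T \<omega> \<noteq> \<top>"
proof -
  let ?N = "{\<omega> \<in> space M. T \<omega> = \<top>}"
  have "prob ?N \<le> exp (- r) ^ k" for k :: nat
  proof -
    have "prob ?N \<le> prob (space M - {\<omega> \<in> space M. T \<omega> \<le> ennreal (real k)})"
      by (intro finite_measure_mono) (auto simp: top_unique)
    also have "\<dots> = exp (- r) ^ k"
      using clock[of "real k"] by (subst prob_compl) (auto simp: exp_of_nat_mult[symmetric] mult.commute)
    finally show ?thesis .
  qed
  moreover have "(\<lambda>k. exp (- r) ^ k) \<longlonglongrightarrow> 0"
    using \<open>0 < r\<close> by (intro LIMSEQ_power_zero) simp
  ultimately have "prob ?N \<le> 0"
    by (intro LIMSEQ_le_const) auto
  then show ?thesis
    using prob_Collect_eq_0[of "\<lambda>\<omega>. T \<omega> = \<top>"] measure_nonneg[of M ?N] by simp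
qed

lemma (in prob_space) clock_distributed:
  assumes [measurable]: "T \<in> borel_measurable M" and "0 < r"
    and clock: "\<And>t. 0 \<le> t \<Longrightarrow> prob {\<omega> \<in> space M. T \<omega> \<le> ennreal t} = 1 - exp (- (t * r))"
  shows "distributed M lborel (\<lambda>\<omega>. enn2real (T \<omega>)) (exponential_density r)"
proof -
  have "prob {\<omega> \<in> space M. enn2real (T \<omega>) \<le> a} = 1 - exp (- a * r)" if "0 \<le> a" for a
  proof -
    have "AE \<omega> in M. T \<omega> \<noteq> \<top>" by (rule AE_clock_finite[OF assms])
    then have "AE \<omega> in M. enn2real (T \<omega>) \<le> a \<longleftrightarrow> T \<omega> \<le> ennreal a"
    proof eventually_elim
      case (elim \<omega>)
      then show ?case using that by (cases "T \<omega>") (auto simp: ennreal_le_iff)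
    qed
    then have "prob {\<omega> \<in> space M. enn2real (T \<omega>) \<le> a} = prob {\<omega> \<in> space M. T \<omega> \<le> ennreal a}"
      by (intro prob_eq_AE) auto
    then show ?thesis using clock[OF that] by simp
  qed
  then show ?thesis
    using \<open>0 < r\<close> by (subst exponential_distributed_iff) auto
qed

lemma first_clock_iff_first_finite:
  fixes T :: "'i \<Rightarrow> ennreal"
  assumes "\<forall>u \<in> insert v S. T u \<noteq> \<top>" "\<forall>w \<in> I - insert v S. T w = \<top>" "S \<subseteq> I - {v}"
  shows "(T v < \<top> \<and> (\<forall>w \<in> I - {v}. T v < T w)) \<longleftrightarrow> (\<forall>w \<in> S. enn2real (T v) < enn2real (T w))"
proof -
  have fin: "T u < \<top>" if "u \<in> insert v S" for u
    using assms(1) that by (auto simp: top.not_eq_extremum)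
  have "T v < T w \<longleftrightarrow> enn2real (T v) < enn2real (T w)" if "w \<in> S" for w
    using fin[of v] fin[of w] that by simp
  moreover have "I - {v} = S \<union> (I - insert v S)" using assms(3) by auto
  ultimately show ?thesis using assms(2) fin[of v] by auto
qed

text \<open>Clocks of rate zero never ring and drop out of the race.\<close>
lemma (in prob_space) prob_first_clock:
  assumes "finite I" "v \<in> I"
    and indep: "indep_vars (\<lambda>_. borel) T I"
    and rates: "\<And>u. u \<in> I \<Longrightarrow> 0 \<le> r u"
    and clocks: "\<And>u t. u \<in> I \<Longrightarrow> 0 \<le> t \<Longrightarrow>
      prob {\<omega> \<in> space M. T u \<omega> \<le> ennreal t} = 1 - exp (- (t * r u))"
  shows "prob {\<omega> \<in> space M. T v \<omega> < \<top> \<and> (\<forall>w \<in> I - {v}. T v \<omega> < T w \<omega>)} = r v / (\<Sum>u\<in>I. r u)"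
proof -
  have T_meas[measurable]: "T u \<in> borel_measurable M" if "u \<in> I" for u
    using indep that unfolding indep_vars_def by auto
  show ?thesis
  proof (cases "r v = 0")
    case True
    have "AE \<omega> in M. T v \<omega> = \<top>"
      using clocks[OF \<open>v \<in> I\<close>] True by (intro AE_clock_eq_top) (auto simp: \<open>v \<in> I\<close>)
    then have "prob {\<omega> \<in> space M. T v \<omega> < \<top> \<and> (\<forall>w \<in> I - {v}. T v \<omega> < T w \<omega>)} = 0"
      by (intro prob_eq_0_AE) auto
    then show ?thesis using True by simp
  next
    case False
    define S where "S = {w \<in> I - {v}. 0 < r w}"
    let ?R = "\<lambda>u \<omega>. enn2real (T u \<omega>)"
    have "0 < r v" using False rates[OF \<open>v \<in> I\<close>] by simp
    have S: "finite S" "v \<notin> S" "insert v S \<subseteq> I" "\<And>u. u \<in> insert v S \<Longrightarrow> 0 < r u"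
      using \<open>finite I\<close> \<open>v \<in> I\<close> \<open>0 < r v\<close> by (auto simp: S_def)
    have [measurable]: "T u \<in> borel_measurable M" if "u \<in> insert v S" for u
      using that S by (intro T_meas) auto
    have zero: "r w = 0" if "w \<in> I - insert v S" for w
      using that rates[of w] by (auto simp: S_def)
    have "AE \<omega> in M. T u \<omega> \<noteq> \<top>" if "u \<in> insert v S" for u
      using that S clocks[of u] by (intro AE_clock_finite[where r="r u"]) auto
    moreover have "AE \<omega> in M. T w \<omega> = \<top>" if "w \<in> I - insert v S" for w
      using that clocks[of w] zero[OF that] by (intro AE_clock_eq_top) auto
    ultimately have "AE \<omega> in M. (\<forall>u \<in> insert v S. T u \<omega> \<noteq> \<top>) \<and> (\<forall>w \<in> I - insert v S. T w \<omega> = \<top>)"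
      using S \<open>finite I\<close> by (simp add: AE_finite_all)
    then have "AE \<omega> in M. (T v \<omega> < \<top> \<and> (\<forall>w \<in> I - {v}. T v \<omega> < T w \<omega>)) \<longleftrightarrow> (\<forall>w \<in> S. ?R v \<omega> < ?R w \<omega>)"
    proof eventually_elim
      case (elim \<omega>)
      then show ?case
        using S by (intro first_clock_iff_first_finite[where T="\<lambda>u. T u \<omega>"]) auto
    qed
    then have "prob {\<omega> \<in> space M. T v \<omega> < \<top> \<and> (\<forall>w \<in> I - {v}. T v \<omega> < T w \<omega>)}
        = prob {\<omega> \<in> space M. \<forall>w \<in> S. ?R v \<omega> < ?R w \<omega>}"
      by (rule prob_eq_AE) (use \<open>finite I\<close> S in auto)
    also have "\<dots> = r v / (\<Sum>u \<in> insert v S. r u)"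
    proof (rule prob_exponential_first)
      show "indep_vars (\<lambda>_. borel) ?R (insert v S)"
        using indep_vars_compose2[OF indep_vars_subset[OF indep \<open>insert v S \<subseteq> I\<close>], of "\<lambda>_. enn2real"]
        by simp
      show "distributed M lborel (?R u) (exponential_density (r u))" if "u \<in> insert v S" for u
        using that S clocks by (intro clock_distributed) auto
    qed (use S in auto)
    also have "(\<Sum>u \<in> insert v S. r u) = (\<Sum>u\<in>I. r u)"
      using S zero \<open>finite I\<close> by (intro sum.mono_neutral_left) auto
    finally show ?thesis .
  qed
qed

section \<open>The data structure\<close>

definition update_level ::
    "(real \<Rightarrow> real \<Rightarrow> ennreal) \<Rightarrow> (nat \<Rightarrow> real) \<Rightarrow> (nat \<Rightarrow> real) \<Rightarrow> (nat \<times> real) list \<Rightarrow> nat \<Rightarrow> ennreal" where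
  "update_level l H Y us i = l (Y i / snd (us ! i)) (H (fst (us ! i)))"

definition updates_to :: "(nat \<times> real) list \<Rightarrow> nat \<Rightarrow> nat set" where
  "updates_to us v = {i. i < length us \<and> fst (us ! i) = v}"

definition key_level ::
    "(real \<Rightarrow> real \<Rightarrow> ennreal) \<Rightarrow> (nat \<Rightarrow> real) \<Rightarrow> (nat \<Rightarrow> real) \<Rightarrow> (nat \<times> real) list \<Rightarrow> nat \<Rightarrow> ennreal" where
  "key_level l H Y us v = (INF i \<in> updates_to us v. update_level l H Y us i)"

lemma finite_updates_to [simp]: "finite (updates_to us v)"
  unfolding updates_to_def by simp

lemma stream_vec_eq_sum: "stream_vec us v = (\<Sum>i \<in> updates_to us v. snd (us ! i))"
proof -
  have "stream_vec us v = sum_list (map (\<lambda>u. if fst u = v then snd u else 0) us)"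
    by (simp add: stream_vec_def sum_list_map_filter')
  also have "\<dots> = (\<Sum>i<length us. if fst (us ! i) = v then snd (us ! i) else 0)"
    by (simp add: sum_list_sum_nth atLeast0LessThan)
  also have "\<dots> = (\<Sum>i \<in> {i \<in> {..<length us}. fst (us ! i) = v}. snd (us ! i))"
    by (rule sum.inter_filter[symmetric]) simp
  also have "{i \<in> {..<length us}. fst (us ! i) = v} = updates_to us v"
    by (auto simp: updates_to_def)
  finally show ?thesis .
qed

definition first_min_update :: "(nat \<Rightarrow> ennreal) \<Rightarrow> nat \<Rightarrow> nat \<Rightarrow> bool" where
  "first_min_update h m j \<longleftrightarrow>
     j < m \<and> h j < \<top> \<and> (\<forall>i<j. h j < h i) \<and> (\<forall>i<m. h j \<le> h i)"

definition ds_correct ::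
    "(real \<Rightarrow> real \<Rightarrow> ennreal) \<Rightarrow> (nat \<Rightarrow> real) \<Rightarrow> (nat \<Rightarrow> real) \<Rightarrow> (nat \<times> real) list \<Rightarrow> ds_state \<Rightarrow> bool" where
  "ds_correct l H Y us s \<longleftrightarrow>
     (s = (None, \<top>) \<and> (\<forall>i<length us. update_level l H Y us i = \<top>)) \<or>
     (\<exists>j. first_min_update (update_level l H Y us) (length us) j \<and>
        s = (Some (fst (us ! j)), update_level l H Y us j))"

lemma first_min_update_unique:
  "first_min_update h m j \<Longrightarrow> first_min_update h m j' \<Longrightarrow> j = j'"
  unfolding first_min_update_def by (metis leD linorder_neqE_nat)

lemma ds_run_snoc: "ds_run l H Y (us @ [u]) = ds_step l H (Y (length us)) u (ds_run l H Y us)"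
  unfolding ds_run_def by (simp add: enumerate_append_eq)

lemma update_level_snoc:
  "i < length us \<Longrightarrow> update_level l H Y (us @ [u]) i = update_level l H Y us i"
  "update_level l H Y (us @ [u]) (length us) = l (Y (length us) / snd u) (H (fst u))"
  unfolding update_level_def by (simp_all add: nth_append)

lemma ds_correct_snoc:
  assumes "ds_correct l H Y us s"
  shows "ds_correct l H Y (us @ [u]) (ds_step l H (Y (length us)) u s)"
proof -
  let ?h = "update_level l H Y us" and ?h' = "update_level l H Y (us @ [u])" and ?m = "length us"
  define h where "h = l (Y ?m / snd u) (H (fst u))"
  have h': "?h' i = (if i < ?m then ?h i else h)" if "i < Suc ?m" for i
    using that by (auto simp: h_def less_Suc_eq update_level_snoc)
  have nth': "(us @ [u]) ! i = (if i < ?m then us ! i else u)" if "i < Suc ?m" for i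
    using that by (auto simp: nth_append)
  show ?thesis
  proof (cases "h < snd s")
    case True
    then have "h < ?h i" if "i < ?m" for i
      using assms that unfolding ds_correct_def first_min_update_def by (auto intro: less_le_trans)
    then have "first_min_update ?h' (Suc ?m) ?m"
      using True h'
      by (auto simp: first_min_update_def less_Suc_eq intro: less_le_trans[OF _ top_greatest] less_imp_le)
    moreover have "ds_step l H (Y ?m) u s = (Some (fst u), h)"
      using True by (simp add: ds_step_def h_def)
    ultimately show ?thesis
      using h' unfolding ds_correct_def by (auto intro!: exI[of _ ?m])
  next
    case False
    then have step: "ds_step l H (Y ?m) u s = s"
      by (simp add: ds_step_def h_def)
    from assms have "ds_correct l H Y (us @ [u]) s"
      unfolding ds_correct_def[of l H Y us]
    proof (elim disjE exE conjE)
      assume "s = (None, \<top>)" "\<forall>i<?m. ?h i = \<top>"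
      then show ?thesis
        using False h' unfolding ds_correct_def by (auto simp: less_Suc_eq not_less top_unique)
    next
      fix j assume j: "first_min_update ?h ?m j" "s = (Some (fst (us ! j)), ?h j)"
      then have "first_min_update ?h' (Suc ?m) j"
        using False h' by (fastforce simp: first_min_update_def less_Suc_eq)
      moreover have "j < ?m" using j(1) by (simp add: first_min_update_def)
      ultimately show ?thesis
        using j(2) h' nth' unfolding ds_correct_def by (auto intro!: exI[of _ j])
    qed
    then show ?thesis by (simp only: step)
  qed
qed

lemma ds_run_correct: "ds_correct l H Y us (ds_run l H Y us)"
proof (induction us rule: rev_induct)
  case Nil
  then show ?case by (simp add: ds_correct_def ds_run_def ds_init_def)
next
  case (snoc u us)
  then show ?case by (simp add: ds_run_snoc ds_correct_snoc)
qed

lemma ds_run_eq_Some_iff: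
  "fst (ds_run l H Y us) = Some v \<longleftrightarrow>
    (\<exists>j. first_min_update (update_level l H Y us) (length us) j \<and> fst (us ! j) = v)"
proof
  assume "fst (ds_run l H Y us) = Some v"
  with ds_run_correct[of l H Y us]
  show "\<exists>j. first_min_update (update_level l H Y us) (length us) j \<and> fst (us ! j) = v"
    unfolding ds_correct_def by auto
next
  assume "\<exists>j. first_min_update (update_level l H Y us) (length us) j \<and> fst (us ! j) = v"
  then obtain j where j: "first_min_update (update_level l H Y us) (length us) j" "fst (us ! j) = v"
    by blast
  from ds_run_correct[of l H Y us] show "fst (ds_run l H Y us) = Some v"
    unfolding ds_correct_def
  proof (elim disjE exE conjE)
    assume "\<forall>i<length us. update_level l H Y us i = \<top>"
    then show ?thesis using j(1) by (auto simp: first_min_update_def)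
  next
    fix j' assume "first_min_update (update_level l H Y us) (length us) j'"
      and "ds_run l H Y us = (Some (fst (us ! j')), update_level l H Y us j')"
    then show ?thesis using first_min_update_unique[OF j(1)] j(2) by simp
  qed
qed

lemma key_level_less_top_if_ds_run_eq_Some:
  assumes "fst (ds_run l H Y us) = Some v"
  shows "key_level l H Y us v < \<top>"
proof -
  obtain j where "first_min_update (update_level l H Y us) (length us) j" "fst (us ! j) = v"
    using assms ds_run_eq_Some_iff by blast
  then have "key_level l H Y us v \<le> update_level l H Y us j"
    unfolding key_level_def updates_to_def first_min_update_def by (auto intro: INF_lower)
  also have "\<dots> < \<top>"
    using \<open>first_min_update _ _ j\<close> by (simp add: first_min_update_def)
  finally show ?thesis .
qed

lemma ds_run_eq_Some_if_key_level_less: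
  assumes "key_level l H Y us v < \<top>" and less: "\<And>w. w \<noteq> v \<Longrightarrow> key_level l H Y us v < key_level l H Y us w"
  shows "fst (ds_run l H Y us) = Some v"
proof -
  let ?h = "update_level l H Y us"
  have "\<exists>i<length us. ?h i \<noteq> \<top>"
    using assms(1) unfolding key_level_def updates_to_def less_top[symmetric] INF_top_conv by auto
  then obtain j where j: "first_min_update ?h (length us) j"
    using ds_run_correct[of l H Y us] unfolding ds_correct_def by auto
  have "key_level l H Y us (fst (us ! j)) \<le> key_level l H Y us v"
  proof -
    have "key_level l H Y us (fst (us ! j)) \<le> ?h j"
      using j unfolding key_level_def updates_to_def first_min_update_def by (auto intro: INF_lower)
    also have "\<dots> \<le> key_level l H Y us v"
      using j unfolding key_level_def updates_to_def first_min_update_def by (auto intro: INF_greatest)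
    finally show ?thesis .
  qed
  then have "fst (us ! j) = v" using less by (meson leD)
  then show ?thesis using j ds_run_eq_Some_iff by blast
qed

section \<open>Independent coordinates of a product of two product spaces\<close>

lemma measurable_case_sum_coordinate:
  assumes "k \<in> I <+> J"
  shows "(\<lambda>\<omega>. case_sum (fst \<omega>) (snd \<omega>) k) \<in> measurable (Pi\<^sub>M I A \<Otimes>\<^sub>M Pi\<^sub>M J B) (case_sum A B k)"
  using assms by (cases k) auto

lemma vimage_case_sum_coordinates_PiE:
  assumes "\<And>i. i \<in> I \<Longrightarrow> C (Inl i) \<subseteq> space (A i)" "\<And>j. j \<in> J \<Longrightarrow> C (Inr j) \<subseteq> space (B j)"
  shows "(\<lambda>\<omega>. \<lambda>k \<in> I <+> J. case_sum (fst \<omega>) (snd \<omega>) k) -` (\<Pi>\<^sub>E k\<in>I <+> J. C k) \<inter> space (Pi\<^sub>M I A \<Otimes>\<^sub>M Pi\<^sub>M J B)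
    = (\<Pi>\<^sub>E i\<in>I. C (Inl i)) \<times> (\<Pi>\<^sub>E j\<in>J. C (Inr j))"
    (is "?f -` _ \<inter> space ?P = _")
proof -
  have "?f \<omega> \<in> (\<Pi>\<^sub>E k\<in>I <+> J. C k) \<longleftrightarrow> (\<forall>i\<in>I. fst \<omega> i \<in> C (Inl i)) \<and> (\<forall>j\<in>J. snd \<omega> j \<in> C (Inr j))"
    for \<omega>
  proof
    assume "?f \<omega> \<in> (\<Pi>\<^sub>E k\<in>I <+> J. C k)"
    then have "\<forall>k\<in>I <+> J. case_sum (fst \<omega>) (snd \<omega>) k \<in> C k"
      unfolding restrict_PiE_iff .
    from this[rule_format, OF InlI] this[rule_format, OF InrI]
    show "(\<forall>i\<in>I. fst \<omega> i \<in> C (Inl i)) \<and> (\<forall>j\<in>J. snd \<omega> j \<in> C (Inr j))" by simp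
  qed (auto simp: restrict_PiE_iff)
  then have "?f -` (\<Pi>\<^sub>E k\<in>I <+> J. C k) \<inter> space ?P
      = {\<omega> \<in> space ?P. (\<forall>i\<in>I. fst \<omega> i \<in> C (Inl i)) \<and> (\<forall>j\<in>J. snd \<omega> j \<in> C (Inr j))}"
    by (intro set_eqI) (simp only: vimage_eq Int_iff mem_Collect_eq conj_commute)
  also have "\<dots> = (\<Pi>\<^sub>E i\<in>I. C (Inl i)) \<times> (\<Pi>\<^sub>E j\<in>J. C (Inr j))"
  proof (intro set_eqI iffI)
    fix \<omega> assume "\<omega> \<in> {\<omega> \<in> space ?P. (\<forall>i\<in>I. fst \<omega> i \<in> C (Inl i)) \<and> (\<forall>j\<in>J. snd \<omega> j \<in> C (Inr j))}"
    then show "\<omega> \<in> (\<Pi>\<^sub>E i\<in>I. C (Inl i)) \<times> (\<Pi>\<^sub>E j\<in>J. C (Inr j))"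
      by (cases \<omega>) (simp add: space_pair_measure space_PiM PiE_iff)
  next
    fix \<omega> assume "\<omega> \<in> (\<Pi>\<^sub>E i\<in>I. C (Inl i)) \<times> (\<Pi>\<^sub>E j\<in>J. C (Inr j))"
    then show "\<omega> \<in> {\<omega> \<in> space ?P. (\<forall>i\<in>I. fst \<omega> i \<in> C (Inl i)) \<and> (\<forall>j\<in>J. snd \<omega> j \<in> C (Inr j))}"
      using assms(1)[THEN subsetD] assms(2)[THEN subsetD]
      by (cases \<omega>) (auto simp: space_pair_measure space_PiM PiE_iff)
  qed
  finally show ?thesis .
qed

lemma distr_pair_PiM_coordinates:
  fixes A :: "'i \<Rightarrow> 'a measure" and B :: "'j \<Rightarrow> 'a measure"
  assumes "finite I" "finite J" and A: "\<And>i. prob_space (A i)" and B: "\<And>j. prob_space (B j)"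
  shows "distr (Pi\<^sub>M I A \<Otimes>\<^sub>M Pi\<^sub>M J B) (Pi\<^sub>M (I <+> J) (case_sum A B))
      (\<lambda>\<omega>. \<lambda>k \<in> I <+> J. case_sum (fst \<omega>) (snd \<omega>) k) = Pi\<^sub>M (I <+> J) (case_sum A B)"
    (is "distr ?P ?Q ?f = ?Q")
proof -
  interpret A: product_prob_space A I using A by (intro product_prob_spaceI)
  interpret B: product_prob_space B J using B by (intro product_prob_spaceI)
  interpret AB: product_prob_space "case_sum A B" "I <+> J"
    using A B by (intro product_prob_spaceI) (simp split: sum.split)
  have f: "?f \<in> measurable ?P ?Q"
    by (intro measurable_restrict measurable_case_sum_coordinate)
  show ?thesis
  proof (rule AB.PiM_eqI)
    fix C assume C: "\<And>k. k \<in> I <+> J \<Longrightarrow> C k \<in> sets (case_sum A B k)"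
    have CA_i: "C (Inl i) \<in> sets (A i)" if "i \<in> I" for i using C[OF InlI[OF that]] by simp
    have CB_j: "C (Inr j) \<in> sets (B j)" if "j \<in> J" for j using C[OF InrI[OF that]] by simp
    have CA: "(\<Pi>\<^sub>E i\<in>I. C (Inl i)) \<in> sets (Pi\<^sub>M I A)"
      and CB: "(\<Pi>\<^sub>E j\<in>J. C (Inr j)) \<in> sets (Pi\<^sub>M J B)"
      using CA_i CB_j \<open>finite I\<close> \<open>finite J\<close> by (simp_all add: sets_PiM_I_finite)
    have preimage: "?f -` (\<Pi>\<^sub>E k\<in>I <+> J. C k) \<inter> space ?P
        = (\<Pi>\<^sub>E i\<in>I. C (Inl i)) \<times> (\<Pi>\<^sub>E j\<in>J. C (Inr j))"
      using CA_i CB_j by (intro vimage_case_sum_coordinates_PiE) (auto dest: sets.sets_into_space)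
    have "(\<Pi>\<^sub>E k\<in>I <+> J. C k) \<in> sets ?Q"
      using C \<open>finite I\<close> \<open>finite J\<close> by (simp add: sets_PiM_I_finite)
    then have "emeasure (distr ?P ?Q ?f) (\<Pi>\<^sub>E k\<in>I <+> J. C k) = emeasure ?P (?f -` (\<Pi>\<^sub>E k\<in>I <+> J. C k) \<inter> space ?P)"
      by (rule emeasure_distr[OF f])
    also have "\<dots> = emeasure (Pi\<^sub>M I A) (\<Pi>\<^sub>E i\<in>I. C (Inl i)) * emeasure (Pi\<^sub>M J B) (\<Pi>\<^sub>E j\<in>J. C (Inr j))"
      unfolding preimage by (rule B.P.emeasure_pair_measure_Times[OF CA CB])
    also have "\<dots> = (\<Prod>k\<in>I <+> J. emeasure (case_sum A B k) (C k))"
      using CA_i CB_j \<open>finite I\<close> \<open>finite J\<close>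
      by (simp add: A.emeasure_PiM B.emeasure_PiM prod.Plus comp_def)
    finally show "emeasure (distr ?P ?Q ?f) (\<Pi>\<^sub>E k\<in>I <+> J. C k) = (\<Prod>k\<in>I <+> J. emeasure (case_sum A B k) (C k))" .
  qed (use \<open>finite I\<close> \<open>finite J\<close> in simp_all)
qed

lemma indep_vars_pair_PiM_coordinates:
  fixes A :: "'i \<Rightarrow> 'a measure" and B :: "'j \<Rightarrow> 'a measure"
  assumes "finite I" "finite J" "I <+> J \<noteq> {}"
    and A: "\<And>i. prob_space (A i)" and B: "\<And>j. prob_space (B j)"
  shows "prob_space.indep_vars (Pi\<^sub>M I A \<Otimes>\<^sub>M Pi\<^sub>M J B) (case_sum A B)
      (\<lambda>k \<omega>. case_sum (fst \<omega>) (snd \<omega>) k) (I <+> J)"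
    and "k \<in> I <+> J \<Longrightarrow>
      distr (Pi\<^sub>M I A \<Otimes>\<^sub>M Pi\<^sub>M J B) (case_sum A B k) (\<lambda>\<omega>. case_sum (fst \<omega>) (snd \<omega>) k) = case_sum A B k"
proof -
  let ?P = "Pi\<^sub>M I A \<Otimes>\<^sub>M Pi\<^sub>M J B" and ?Q = "Pi\<^sub>M (I <+> J) (case_sum A B)"
  let ?f = "\<lambda>\<omega>. \<lambda>k \<in> I <+> J. case_sum (fst \<omega>) (snd \<omega>) k"
  interpret A: product_prob_space A I using A by (intro product_prob_spaceI)
  interpret B: product_prob_space B J using B by (intro product_prob_spaceI)
  interpret pair_prob_space "Pi\<^sub>M I A" "Pi\<^sub>M J B" ..
  have f: "?f \<in> measurable ?P ?Q"
    by (intro measurable_restrict measurable_case_sum_coordinate)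
  have marginal: "distr ?P (case_sum A B k) (\<lambda>\<omega>. case_sum (fst \<omega>) (snd \<omega>) k) = case_sum A B k"
    if k: "k \<in> I <+> J" for k
  proof -
    have "distr ?P (case_sum A B k) (\<lambda>\<omega>. case_sum (fst \<omega>) (snd \<omega>) k) = distr (distr ?P ?Q ?f) (case_sum A B k) (\<lambda>x. x k)"
      using f k by (subst distr_distr) (auto intro!: distr_cong)
    also have "\<dots> = case_sum A B k"
      unfolding distr_pair_PiM_coordinates[OF assms(1,2) A B]
      using k A B by (intro distr_PiM_component) (simp_all split: sum.split)
    finally show ?thesis .
  qed
  then show "k \<in> I <+> J \<Longrightarrow> distr ?P (case_sum A B k) (\<lambda>\<omega>. case_sum (fst \<omega>) (snd \<omega>) k) = case_sum A B k" .
  show "indep_vars (case_sum A B) (\<lambda>k \<omega>. case_sum (fst \<omega>) (snd \<omega>) k) (I <+> J)"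
    using measurable_case_sum_coordinate assms(3)
    by (subst indep_vars_iff_distr_eq_PiM')
       (simp_all add: marginal distr_pair_PiM_coordinates[OF assms(1,2) A B] cong: PiM_cong)
qed

lemma prob_space_sampler_space: "prob_space (sampler_space n m)"
  unfolding sampler_space_def
  by (intro prob_space_pair prob_space_PiM prob_space_uniform_measure prob_space_exponential_density) auto

lemma measurable_sampler_space_fst [measurable]:
  "(\<lambda>\<omega>. fst \<omega> u) \<in> borel_measurable (sampler_space n m)"
proof (cases "u < n")
  case False
  then have "fst \<omega> u = undefined" if "\<omega> \<in> space (sampler_space n m)" for \<omega>
    using that by (auto simp: sampler_space_def space_pair_measure space_PiM PiE_def extensional_def)
  then show ?thesis by (simp cong: measurable_cong)
qed (simp add: sampler_space_def)

lemma measurable_sampler_space_snd [measurable]: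
  "(\<lambda>\<omega>. snd \<omega> i) \<in> borel_measurable (sampler_space n m)"
proof (cases "i < m")
  case False
  then have "snd \<omega> i = undefined" if "\<omega> \<in> space (sampler_space n m)" for \<omega>
    using that by (auto simp: sampler_space_def space_pair_measure space_PiM PiE_def extensional_def)
  then show ?thesis by (simp cong: measurable_cong)
qed (simp add: sampler_space_def)

lemma sampler_space_coordinates:
  assumes "0 < n"
  shows "prob_space.indep_vars (sampler_space n m) (\<lambda>_. borel)
      (\<lambda>k \<omega>. case_sum (fst \<omega>) (snd \<omega>) k) ({..<n} <+> {..<m})"
    and "u < n \<Longrightarrow> distr (sampler_space n m) borel (\<lambda>\<omega>. fst \<omega> u) = uniform_measure lborel {0..1}"
    and "i < m \<Longrightarrow> distributed (sampler_space n m) lborel (\<lambda>\<omega>. snd \<omega> i) (exponential_density 1)"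
proof -
  let ?U = "\<lambda>_ :: nat. uniform_measure lborel {0..1 :: real}"
  let ?E = "\<lambda>_ :: nat. density lborel (exponential_density 1)"
  have U: "prob_space (?U u)" for u by (intro prob_space_uniform_measure) auto
  have E: "prob_space (?E i)" for i by (intro prob_space_exponential_density) simp
  have "{..<n} <+> {..<m} \<noteq> {}" using \<open>0 < n\<close> by auto
  note coordinates = indep_vars_pair_PiM_coordinates[OF finite_lessThan finite_lessThan this U E]
  interpret prob_space "sampler_space n m" by (rule prob_space_sampler_space)
  have "indep_vars (\<lambda>_. borel) (\<lambda>k \<omega>. id (case_sum (fst \<omega>) (snd \<omega>) k)) ({..<n} <+> {..<m})"
    using coordinates(1)
    by (intro indep_vars_compose2[where N="\<lambda>_. borel"]) (auto simp: sampler_space_def split: sum.split)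
  then show "indep_vars (\<lambda>_. borel) (\<lambda>k \<omega>. case_sum (fst \<omega>) (snd \<omega>) k) ({..<n} <+> {..<m})"
    by simp
  show "distr (sampler_space n m) borel (\<lambda>\<omega>. fst \<omega> u) = uniform_measure lborel {0..1}" if "u < n"
    using coordinates(2)[of "Inl u"] that by (auto simp: sampler_space_def cong: distr_cong)
  show "distributed (sampler_space n m) lborel (\<lambda>\<omega>. snd \<omega> i) (exponential_density 1)" if "i < m"
    using coordinates(2)[of "Inr i"] that
    by (auto simp: distributed_def sampler_space_def exponential_density_def cong: distr_cong)
qed

locale levy_sampler =
  fixes G :: "real \<Rightarrow> real" and N :: "'w measure" and X :: "real \<Rightarrow> 'w \<Rightarrow> ennreal"
    and n :: nat and us :: "(nat \<times> real) list"
  assumes laplace: "has_laplace_exponent N X G"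
    and updates: "\<And>u. u \<in> set us \<Longrightarrow> fst u < n \<and> 0 < snd u"
    and n_pos: "0 < n"
    and G_zero: "G 0 = 0"
begin

abbreviation \<Omega> :: "((nat \<Rightarrow> real) \<times> (nat \<Rightarrow> real)) measure" where
  "\<Omega> \<equiv> sampler_space n (length us)"

sublocale prob_space \<Omega> by (rule prob_space_sampler_space)

definition clock :: "nat \<Rightarrow> (nat \<Rightarrow> real) \<times> (nat \<Rightarrow> real) \<Rightarrow> ennreal" where
  "clock v \<omega> = key_level (levy_level N X) (fst \<omega>) (snd \<omega>) us v"

definition arrival :: "nat \<Rightarrow> (nat \<Rightarrow> real) \<times> (nat \<Rightarrow> real) \<Rightarrow> real" where
  "arrival v \<omega> = Min ((\<lambda>i. snd \<omega> i / snd (us ! i)) ` updates_to us v)"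

lemma valid_update_nth: "i < length us \<Longrightarrow> fst (us ! i) < n \<and> 0 < snd (us ! i)"
  using updates nth_mem by blast

lemma updates_to_empty: "n \<le> v \<Longrightarrow> updates_to us v = {}"
  using valid_update_nth by (fastforce simp: updates_to_def)

lemma stream_vec_pos: "updates_to us v \<noteq> {} \<Longrightarrow> 0 < stream_vec us v"
  unfolding stream_vec_eq_sum using valid_update_nth by (intro sum_pos) (auto simp: updates_to_def)

lemma G_stream_vec_nonneg: "0 \<le> G (stream_vec us v)"
  using laplace_exponent_nonneg[OF laplace stream_vec_pos] G_zero
  by (cases "updates_to us v = {}") (auto simp: stream_vec_eq_sum)

lemma measurable_update_level [measurable]:
  "(\<lambda>\<omega>. update_level (levy_level N X) (fst \<omega>) (snd \<omega>) us i) \<in> borel_measurable \<Omega>"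
  unfolding update_level_def by (intro borel_measurable_levy_level[OF laplace]) measurable

lemma measurable_clock [measurable]: "clock v \<in> borel_measurable \<Omega>"
  unfolding clock_def key_level_def by measurable

lemma clock_eq_top: "updates_to us v = {} \<Longrightarrow> clock v \<omega> = \<top>"
  by (simp add: clock_def key_level_def)

lemma clock_eq_levy_level:
  "updates_to us v \<noteq> {} \<Longrightarrow> clock v \<omega> = levy_level N X (arrival v \<omega>) (fst \<omega> v)"
  unfolding clock_def key_level_def arrival_def update_level_def
  by (subst INF_levy_level[OF laplace, symmetric]) (auto simp: updates_to_def intro!: INF_cong)

definition scaled_coordinate :: "nat + nat \<Rightarrow> (nat \<Rightarrow> real) \<times> (nat \<Rightarrow> real) \<Rightarrow> real" where
  "scaled_coordinate k \<omega> = (case k of Inl u \<Rightarrow> fst \<omega> u | Inr i \<Rightarrow> snd \<omega> i / snd (us ! i))"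

lemma indep_scaled_coordinates:
  "indep_vars (\<lambda>_. borel) scaled_coordinate ({..<n} <+> {..<length us})"
proof -
  let ?scale = "\<lambda>k x. case k of Inl _ \<Rightarrow> x | Inr i \<Rightarrow> x / snd (us ! i)"
  have "indep_vars (\<lambda>_. borel) (\<lambda>k \<omega>. ?scale k (case_sum (fst \<omega>) (snd \<omega>) k)) ({..<n} <+> {..<length us})"
    by (intro indep_vars_compose2[OF sampler_space_coordinates(1)[OF n_pos]]) (auto split: sum.split)
  moreover have "(\<lambda>k \<omega>. ?scale k (case_sum (fst \<omega>) (snd \<omega>) k)) = scaled_coordinate"
    by (auto simp: fun_eq_iff scaled_coordinate_def split: sum.split)
  ultimately show ?thesis by simp
qed

lemma distributed_scaled_coordinate:
  assumes "i < length us"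
  shows "distributed \<Omega> lborel (scaled_coordinate (Inr i)) (exponential_density (snd (us ! i)))"
proof -
  have "0 < snd (us ! i)" using valid_update_nth[OF assms] by simp
  then have "distributed \<Omega> lborel (\<lambda>\<omega>. (1 / snd (us ! i)) * snd \<omega> i) (erlang_density 0 (1 / (1 / snd (us ! i))))"
    by (intro erlang_distributed_mult_const[OF sampler_space_coordinates(3)[OF n_pos assms]]) auto
  moreover have "scaled_coordinate (Inr i) = (\<lambda>\<omega>. snd \<omega> i / snd (us ! i))"
    by (simp add: fun_eq_iff scaled_coordinate_def)
  ultimately show ?thesis by simp
qed

lemma arrival_eq_Min_scaled_coordinate:
  "arrival v = (\<lambda>\<omega>. Min ((\<lambda>k. scaled_coordinate k \<omega>) ` Inr ` updates_to us v))"
  by (simp add: arrival_def scaled_coordinate_def image_image fun_eq_iff)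

lemma distributed_arrival:
  assumes "updates_to us v \<noteq> {}"
  shows "distributed \<Omega> lborel (arrival v) (exponential_density (stream_vec us v))"
proof -
  let ?K = "Inr ` updates_to us v :: (nat + nat) set" and ?r = "\<lambda>k. snd (us ! projr k)"
  have K: "?K \<subseteq> {..<n} <+> {..<length us}" by (auto simp: updates_to_def)
  have "distributed \<Omega> lborel (\<lambda>\<omega>. Min ((\<lambda>k. scaled_coordinate k \<omega>) ` ?K)) (exponential_density (\<Sum>k\<in>?K. ?r k))"
  proof (rule exponential_distributed_Min)
    show "indep_vars (\<lambda>_. borel) scaled_coordinate ?K"
      using indep_scaled_coordinates K by (rule indep_vars_subset)
    show "0 < ?r k" "distributed \<Omega> lborel (scaled_coordinate k) (exponential_density (?r k))"
      if "k \<in> ?K" for k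
      using that valid_update_nth distributed_scaled_coordinate by (auto simp: updates_to_def)
  qed (use assms in simp_all)
  moreover have "(\<Sum>k\<in>?K. ?r k) = stream_vec us v"
    by (simp add: stream_vec_eq_sum sum.reindex)
  ultimately show ?thesis by (simp add: arrival_eq_Min_scaled_coordinate)
qed

lemma indep_hash_arrival:
  assumes "v < n"
  shows "indep_var borel (\<lambda>\<omega>. fst \<omega> v) borel (arrival v)"
proof -
  have "indep_vars (\<lambda>_. borel) scaled_coordinate (insert (Inl v) (Inr ` updates_to us v))"
    using assms by (intro indep_vars_subset[OF indep_scaled_coordinates]) (auto simp: updates_to_def)
  then have "indep_var borel (scaled_coordinate (Inl v)) borel
      (\<lambda>\<omega>. Min ((\<lambda>k. scaled_coordinate k \<omega>) ` Inr ` updates_to us v))"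
    by (intro indep_vars_Min) auto
  then show ?thesis
    by (simp add: arrival_eq_Min_scaled_coordinate scaled_coordinate_def[abs_def])
qed

lemma prob_clock_le:
  assumes "0 \<le> t"
  shows "prob {\<omega> \<in> space \<Omega>. clock v \<omega> \<le> ennreal t} = 1 - exp (- (t * G (stream_vec us v)))"
proof (cases "updates_to us v = {}")
  case True
  then show ?thesis by (simp add: clock_eq_top stream_vec_eq_sum G_zero top_unique)
next
  case False
  then have "v < n" using updates_to_empty by (meson not_less)
  have "prob {\<omega> \<in> space \<Omega>. clock v \<omega> \<le> ennreal t}
      = prob {\<omega> \<in> space \<Omega>. levy_level N X (arrival v \<omega>) (fst \<omega> v) \<le> ennreal t}"
    using False by (simp add: clock_eq_levy_level)
  also have "\<dots> = 1 - exp (- (t * G (stream_vec us v)))"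
    by (rule prob_levy_level_le[OF laplace sampler_space_coordinates(2)[OF n_pos \<open>v < n\<close>]
          distributed_arrival[OF False] stream_vec_pos[OF False] indep_hash_arrival[OF \<open>v < n\<close>] assms])
  finally show ?thesis .
qed

end

context levy_sampler
begin

lemma indep_clocks: "indep_vars (\<lambda>_. borel) clock {..<n}"
proof -
  let ?coord = "\<lambda>k \<omega>. case_sum (fst \<omega>) (snd \<omega>) k"
  define K where "K v = insert (Inl v) (Inr ` updates_to us v)" for v :: nat
  define g where "g v f = (INF i \<in> updates_to us v. levy_level N X (f (Inr i) / snd (us ! i)) (f (Inl v)))"
    for v and f :: "nat + nat \<Rightarrow> real"
  have "indep_vars (\<lambda>v. Pi\<^sub>M (K v) (\<lambda>_. borel)) (\<lambda>v \<omega>. restrict (\<lambda>k. ?coord k \<omega>) (K v)) {..<n}"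
    using valid_update_nth
    by (intro indep_vars_restrict[OF sampler_space_coordinates(1)[OF n_pos]])
       (auto simp: K_def updates_to_def disjoint_family_on_def)
  moreover have "g v \<in> borel_measurable (Pi\<^sub>M (K v) (\<lambda>_. borel))" for v
    unfolding g_def
  proof (intro borel_measurable_INF borel_measurable_levy_level[OF laplace] borel_measurable_divide)
    fix i assume "i \<in> updates_to us v"
    then show "(\<lambda>f. f (Inr i)) \<in> borel_measurable (Pi\<^sub>M (K v) (\<lambda>_. borel))"
      by (intro measurable_component_singleton) (simp add: K_def)
  qed (auto simp: K_def intro: measurable_component_singleton)
  ultimately have "indep_vars (\<lambda>_. borel) (\<lambda>v \<omega>. g v (restrict (\<lambda>k. ?coord k \<omega>) (K v))) {..<n}"
    by (rule indep_vars_compose2)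
  moreover have "g v (restrict (\<lambda>k. ?coord k \<omega>) (K v)) = clock v \<omega>" for v \<omega>
    by (auto simp: g_def K_def clock_def key_level_def update_level_def updates_to_def intro!: INF_cong)
  ultimately show ?thesis by simp
qed

lemma prob_first_clock_sampler:
  assumes "v < n"
  shows "prob {\<omega> \<in> space \<Omega>. clock v \<omega> < \<top> \<and> (\<forall>w \<in> {..<n} - {v}. clock v \<omega> < clock w \<omega>)}
    = G (stream_vec us v) / (\<Sum>u<n. G (stream_vec us u))"
  using assms
  by (intro prob_first_clock[OF finite_lessThan _ indep_clocks]) (simp_all add: G_stream_vec_nonneg prob_clock_le)

lemma ds_run_eq_Some_if_first_clock:
  assumes "clock v \<omega> < \<top>" "\<forall>w \<in> {..<n} - {v}. clock v \<omega> < clock w \<omega>"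
  shows "fst (ds_run (levy_level N X) (fst \<omega>) (snd \<omega>) us) = Some v"
proof (rule ds_run_eq_Some_if_key_level_less)
  fix w assume "w \<noteq> v"
  then show "key_level (levy_level N X) (fst \<omega>) (snd \<omega>) us v < key_level (levy_level N X) (fst \<omega>) (snd \<omega>) us w"
    using assms clock_eq_top[OF updates_to_empty, of w \<omega>] unfolding clock_def
    by (cases "w < n") auto
qed (use assms in \<open>simp add: clock_def\<close>)

lemma sets_ds_run_eq_Some:
  "{\<omega> \<in> space \<Omega>. fst (ds_run (levy_level N X) (fst \<omega>) (snd \<omega>) us) = Some v} \<in> sets \<Omega>"
  unfolding ds_run_eq_Some_iff first_min_update_def by measurable

lemma prob_ds_run_eq_Some_rate_zero:
  assumes "G (stream_vec us v) = 0"
  shows "prob {\<omega> \<in> space \<Omega>. fst (ds_run (levy_level N X) (fst \<omega>) (snd \<omega>) us) = Some v} = 0"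
proof -
  have "AE \<omega> in \<Omega>. clock v \<omega> = \<top>"
    using assms by (intro AE_clock_eq_top) (simp_all add: prob_clock_le)
  then have "AE \<omega> in \<Omega>. fst (ds_run (levy_level N X) (fst \<omega>) (snd \<omega>) us) \<noteq> Some v"
    by eventually_elim (auto simp: clock_def dest: key_level_less_top_if_ds_run_eq_Some)
  then show ?thesis by (rule prob_eq_0_AE)
qed

text \<open>The events that the sampler outputs \<open>v\<close> are disjoint and contain the events that the
  clock of \<open>v\<close> rings strictly first, whose probabilities already add up to one.\<close>
lemma prob_ds_run_eq_Some:
  assumes "v < n"
  shows "prob {\<omega> \<in> space \<Omega>. fst (ds_run (levy_level N X) (fst \<omega>) (snd \<omega>) us) = Some v}
    = G (stream_vec us v) / (\<Sum>u<n. G (stream_vec us u))"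
proof -
  define out where "out v = {\<omega> \<in> space \<Omega>. fst (ds_run (levy_level N X) (fst \<omega>) (snd \<omega>) us) = Some v}" for v
  define p where "p v = G (stream_vec us v) / (\<Sum>u<n. G (stream_vec us u))" for v
  have p_le: "p w \<le> prob (out w)" if "w < n" for w
    unfolding p_def prob_first_clock_sampler[OF that, symmetric] out_def
    using sets_ds_run_eq_Some ds_run_eq_Some_if_first_clock by (intro finite_measure_mono) auto
  show ?thesis
  proof (cases "(\<Sum>u<n. G (stream_vec us u)) = 0")
    case True
    then have "G (stream_vec us v) = 0"
      using assms G_stream_vec_nonneg by (simp add: sum_nonneg_eq_0_iff)
    then show ?thesis using True prob_ds_run_eq_Some_rate_zero by simp
  next
    case False
    have "(\<Sum>w<n. prob (out w)) = prob (\<Union>w<n. out w)"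
      using sets_ds_run_eq_Some
      by (intro finite_measure_finite_Union[symmetric]) (auto simp: out_def disjoint_family_on_def)
    also have "\<dots> \<le> 1" by simp
    also have "\<dots> = (\<Sum>w<n. p w)"
      using False by (simp add: p_def sum_divide_distrib[symmetric])
    finally have "(\<Sum>w<n. prob (out w) - p w) = 0"
      using p_le sum_mono[of "{..<n}" p "\<lambda>w. prob (out w)"] by (simp add: sum_subtractf)
    then have "prob (out v) - p v = 0"
      using p_le assms by (subst (asm) sum_nonneg_eq_0_iff) auto
    then show ?thesis by (simp add: out_def p_def)
  qed
qed

end

theorem mainTheorem2:
  fixes G :: "real \<Rightarrow> real"
    and M :: "'w measure" and X :: "real \<Rightarrow> 'w \<Rightarrow> ennreal"
    and n :: nat and us :: "(nat \<times> real) list" and v :: nat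
  assumes "in_class_G G"
    and "has_laplace_exponent M X G"
    and "\<forall>u \<in> set us. fst u < n \<and> snd u > 0"
    and "v < n"
  shows "measure (sampler_space n (length us))
           {\<omega> \<in> space (sampler_space n (length us)).
              fst (ds_run (levy_level M X) (fst \<omega>) (snd \<omega>) us) = Some v}
         = G (stream_vec us v) / (\<Sum>u<n. G (stream_vec us u))"
proof -
  have "G 0 = 0" using \<open>in_class_G G\<close> by (auto simp: in_class_G_def)
  then interpret levy_sampler G M X n us
    using assms by unfold_locales auto
  show ?thesis by (rule prob_ds_run_eq_Some[OF \<open>v < n\<close>])
qed

end
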